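(* For any set $\Phi\cup\{\psi\}$ of $\mathsf{BSML}^{\sqcup}$-formulas, if $\Phi\vdash\psi$ in the natural deduction system $\mathcal{S}^{\sqcup}$ described below, then $\Phi\models\psi$.
   Context: Syntax: $\mathsf{BSML}^{\sqcup}$-formulas $\phi ::= p \mid \neg\phi \mid (\phi\wedge\phi) \mid (\phi\vee\phi) \mid \Diamond\phi \mid \mathrm{NE}\mid\phi\sqcup\phi$ ($p$ from a countably infinite set of variables). Classical formulas (denoted $\alpha,\beta$) are those built from $p,\neg,\wedge,\vee,\Diamond$ only. Abbreviations: $\Box\phi:=\neg\Diamond\neg\phi$; $\bot:=p\wedge\neg p$ (fixed $p$); $\bot\!\!\!\bot:=\bot\wedge\mathrm{NE}$. Semantics on Kripke models $M=(W,R,V)$ and states $s\subseteq W$: $s\models p$ iff $s\subseteq V(p)$; $s\dashv p$ iff $s\cap V(p)=\emptyset$; $s\models\mathrm{NE}$ iff $s\ne\emptyset$; $s\dashv\mathrm{NE}$ iff $s=\emptyset$; $s\models\neg\phi$ iff $s\dashv\phi$; $s\dashv\neg\phi$ iff $s\models\phi$; $s\models\phi\wedge\psi$ iff both; $s\dashv\phi\wedge\psi$ iff $s=t\cup u$ with $t\dashv\phi$, $u\dashv\psi$; $s\models\phi\vee\psi$ iff $s=t\cup u$ with $t\models\phi$, $u\models\psi$; $s\dashv\phi\vee\psi$ iff $s\dashv\phi$ and $s\dashv\psi$; $s\models\phi\sqcup\psi$ iff $s\models\phi$ or $s\models\psi$; $s\dashv\phi\sqcup\psi$ iff $s\dashv\phi$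 and $s\dashv\psi$; $s\models\Diamond\phi$ iff every $w\in s$ has a nonempty $t\subseteq R[w]$ with $t\models\phi$; $s\dashv\Diamond\phi$ iff $R[w]\dashv\phi$ for all $w\in s$ (where $R[w]=\{v:wRv\}$). $\Phi\models\psi$ iff every state (in every model) supporting all formulas of $\Phi$ supports $\psi$. System $\mathcal{S}^{\sqcup}$ (natural deduction with assumptions that may be discharged; $\Phi\vdash\psi$ iff there is a derivation of $\psi$ all of whose undischarged assumptions lie in $\Phi$; "$A\Leftrightarrow B$" means both one-step rules $A/B$ and $B/A$; $\phi,\psi,\chi$ range over all formulas): (a) $\wedge$I: from $\phi,\psi$ infer $\phi\wedge\psi$; $\wedge$E: from $\phi\wedge\psi$ infer $\phi$, and infer $\psi$. (b) $\neg$I: from a derivation of $\bot$ from assumption $\alpha$ infer $\neg\alpha$ discharging $\alpha$, provided the undischarged assumptions of that derivation contain no $\mathrm{NE}$; $\neg$E: from $\alpha$ and $\neg\alpha$ infer $\beta$; $\neg\neg\phi\Leftrightarrow\phi$; $\neg(\phi\wedge\psi)\Leftrightarrow\neg\phi\vee\neg\psi$; $\neg(\phi\vee\psi)\Leftrightarrow\neg\phi\wedge\neg\psi$; $\neg\mathrm{NE}\Leftrightarrow\bot$. (c) $\vee$I: from $\phi$ infer $\phi\vee\psi$, provided $\psi$ contains no $\mathrm{NE}$; $\vee$W: from $\phi$ infer $\phi\vee\phi$; Com: from $\phi\vee\psi$ infer $\psi\vee\phi$; $\vee$E: from $\phi\vee\psi$, a derivation of $\chi$ from $\phi$ and a derivation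 of $\chi$ from $\psi$, infer $\chi$ (discharging $\phi,\psi$), provided the undischarged assumptions of the two subderivations contain no $\mathrm{NE}$ and $\chi$ contains no $\sqcup$; $\vee$Mon: from $\phi\vee\psi$ and a derivation of $\chi$ from $\psi$ whose undischarged assumptions contain no $\mathrm{NE}$, infer $\phi\vee\chi$ (discharging $\psi$). (d) from $\bot\vee\phi$ infer $\phi$; from $\bot\!\!\!\bot\vee\phi$ infer any $\psi$. (e) $\Diamond$Mon: if $\psi$ is derivable from $\phi$ alone (no other undischarged assumptions), from $\Diamond\phi$ infer $\Diamond\psi$; $\Box$Mon: if $\psi$ is derivable from $\phi_1,\dots,\phi_n$ alone, from $\Box\phi_1,\dots,\Box\phi_n$ infer $\Box\psi$; $\neg\Diamond\phi\Leftrightarrow\Box\neg\phi$. (f) from $\Diamond(\phi\vee(\psi\wedge\mathrm{NE}))$ infer $\Diamond\psi$; from $\Diamond\phi,\Diamond\psi$ infer $\Diamond(\phi\vee\psi)$; from $\Box(\phi\wedge\mathrm{NE})$ infer $\Diamond\phi$; from $\Box\phi,\Diamond\psi$ infer $\Box(\phi\vee\psi)$. (g) $\sqcup$I: from $\phi$ infer $\phi\sqcup\psi$ and $\psi\sqcup\phi$; $\sqcup$E: from $\phi\sqcup\psi$, a derivation of $\chi$ from $\phi$ and one from $\psi$, infer $\chi$ (discharging); from $\phi\vee(\psi\sqcup\chi)$ infer $(\phi\vee\psi)\sqcup(\phi\vee\chi)$; $\neg(\phi\sqcup\psi)\Leftrightarrow\neg\phi\wedge\neg\psi$; axiom $\bot\sqcup\mathrm{NE}$.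 (h) $\Diamond(\phi\sqcup\psi)\Leftrightarrow\Diamond\phi\vee\Diamond\psi$; $\Box(\phi\sqcup\psi)\Leftrightarrow\Box\phi\vee\Box\psi$. *)

theory Defs
  imports Main
begin

datatype form =
    P nat
  | Neg form
  | And form form
  | Or form form
  | Dia form
  | NE
  | GD form form   (* global disjunction, \<sqcup> *)

definition Box :: "form \<Rightarrow> form" where
  "Box \<phi> = Neg (Dia (Neg \<phi>))"

definition Bot :: form where
  "Bot = And (P 0) (Neg (P 0))"

definition BotBot :: form where
  "BotBot = And Bot NE"

fun classical :: "form \<Rightarrow> bool" where
  "classical (P p) = True"
| "classical (Neg \<phi>) = classical \<phi>"
| "classical (And \<phi> \<psi>) = (classical \<phi> \<and> classical \<psi>)"
| "classical (Or \<phi> \<psi>) = (classical \<phi> \<and> classical \<psi>)"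
| "classical (Dia \<phi>) = classical \<phi>"
| "classical NE = False"
| "classical (GD \<phi> \<psi>) = False"

fun noNE :: "form \<Rightarrow> bool" where
  "noNE (P p) = True"
| "noNE (Neg \<phi>) = noNE \<phi>"
| "noNE (And \<phi> \<psi>) = (noNE \<phi> \<and> noNE \<psi>)"
| "noNE (Or \<phi> \<psi>) = (noNE \<phi> \<and> noNE \<psi>)"
| "noNE (Dia \<phi>) = noNE \<phi>"
| "noNE NE = False"
| "noNE (GD \<phi> \<psi>) = (noNE \<phi> \<and> noNE \<psi>)"

fun noGD :: "form \<Rightarrow> bool" where
  "noGD (P p) = True"
| "noGD (Neg \<phi>) = noGD \<phi>"
| "noGD (And \<phi> \<psi>) = (noGD \<phi> \<and> noGD \<psi>)"
| "noGD (Or \<phi> \<psi>) = (noGD \<phi> \<and> noGD \<psi>)"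
| "noGD (Dia \<phi>) = noGD \<phi>"
| "noGD NE = True"
| "noGD (GD \<phi> \<psi>) = False"

(* A Kripke model on world type 'w: accessibility R, valuation V; W = UNIV.
   supp = support (\<Turnstile>), anti = anti-support (\<Dashv>). *)
fun supp :: "('w \<times> 'w) set \<Rightarrow> (nat \<Rightarrow> 'w set) \<Rightarrow> 'w set \<Rightarrow> form \<Rightarrow> bool"
and anti :: "('w \<times> 'w) set \<Rightarrow> (nat \<Rightarrow> 'w set) \<Rightarrow> 'w set \<Rightarrow> form \<Rightarrow> bool" where
  "supp R V s (P p) = (s \<subseteq> V p)"
| "anti R V s (P p) = (s \<inter> V p = {})"
| "supp R V s NE = (s \<noteq> {})"
| "anti R V s NE = (s = {})"
| "supp R V s (Neg \<phi>) = anti R V s \<phi>"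
| "anti R V s (Neg \<phi>) = supp R V s \<phi>"
| "supp R V s (And \<phi> \<psi>) = (supp R V s \<phi> \<and> supp R V s \<psi>)"
| "anti R V s (And \<phi> \<psi>) = (\<exists>t u. s = t \<union> u \<and> anti R V t \<phi> \<and> anti R V u \<psi>)"
| "supp R V s (Or \<phi> \<psi>) = (\<exists>t u. s = t \<union> u \<and> supp R V t \<phi> \<and> supp R V u \<psi>)"
| "anti R V s (Or \<phi> \<psi>) = (anti R V s \<phi> \<and> anti R V s \<psi>)"
| "supp R V s (GD \<phi> \<psi>) = (supp R V s \<phi> \<or> supp R V s \<psi>)"
| "anti R V s (GD \<phi> \<psi>) = (anti R V s \<phi> \<and> anti R V s \<psi>)"
| "supp R V s (Dia \<phi>) = (\<forall>w\<in>s. \<exists>t. t \<noteq> {} \<and> t \<subseteq> R `` {w} \<and> supp R V t \<phi>)"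
| "anti R V s (Dia \<phi>) = (\<forall>w\<in>s. anti R V (R `` {w}) \<phi>)"

(* der \<Gamma> \<phi>: there is a derivation of \<phi> whose set of undischarged assumptions is \<Gamma>.
   Discharging an assumption \<phi> removes it from the set (vacuous discharge allowed). *)
inductive der :: "form set \<Rightarrow> form \<Rightarrow> bool" where
  assm: "der {\<phi>} \<phi>"
| conjI: "der \<Gamma> \<phi> \<Longrightarrow> der \<Delta> \<psi> \<Longrightarrow> der (\<Gamma> \<union> \<Delta>) (And \<phi> \<psi>)"
| conjE1: "der \<Gamma> (And \<phi> \<psi>) \<Longrightarrow> der \<Gamma> \<phi>"
| conjE2: "der \<Gamma> (And \<phi> \<psi>) \<Longrightarrow> der \<Gamma> \<psi>"
| negI: "classical \<alpha> \<Longrightarrow> der \<Gamma> Bot \<Longrightarrow> (\<forall>\<chi>\<in>\<Gamma>. noNE \<chi>) \<Longrightarrow> der (\<Gamma> - {\<alpha>}) (Neg \<alpha>)"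
| negE: "classical \<alpha> \<Longrightarrow> classical \<beta> \<Longrightarrow> der \<Gamma> \<alpha> \<Longrightarrow> der \<Delta> (Neg \<alpha>) \<Longrightarrow> der (\<Gamma> \<union> \<Delta>) \<beta>"
| dnegE: "der \<Gamma> (Neg (Neg \<phi>)) \<Longrightarrow> der \<Gamma> \<phi>"
| dnegI: "der \<Gamma> \<phi> \<Longrightarrow> der \<Gamma> (Neg (Neg \<phi>))"
| dmAnd1: "der \<Gamma> (Neg (And \<phi> \<psi>)) \<Longrightarrow> der \<Gamma> (Or (Neg \<phi>) (Neg \<psi>))"
| dmAnd2: "der \<Gamma> (Or (Neg \<phi>) (Neg \<psi>)) \<Longrightarrow> der \<Gamma> (Neg (And \<phi> \<psi>))"
| dmOr1: "der \<Gamma> (Neg (Or \<phi> \<psi>)) \<Longrightarrow> der \<Gamma> (And (Neg \<phi>) (Neg \<psi>))"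
| dmOr2: "der \<Gamma> (And (Neg \<phi>) (Neg \<psi>)) \<Longrightarrow> der \<Gamma> (Neg (Or \<phi> \<psi>))"
| negNE1: "der \<Gamma> (Neg NE) \<Longrightarrow> der \<Gamma> Bot"
| negNE2: "der \<Gamma> Bot \<Longrightarrow> der \<Gamma> (Neg NE)"
| disjI: "der \<Gamma> \<phi> \<Longrightarrow> noNE \<psi> \<Longrightarrow> der \<Gamma> (Or \<phi> \<psi>)"
| disjW: "der \<Gamma> \<phi> \<Longrightarrow> der \<Gamma> (Or \<phi> \<phi>)"
| disjCom: "der \<Gamma> (Or \<phi> \<psi>) \<Longrightarrow> der \<Gamma> (Or \<psi> \<phi>)"
| disjE: "der \<Gamma> (Or \<phi> \<psi>) \<Longrightarrow> der \<Delta>1 \<chi> \<Longrightarrow> der \<Delta>2 \<chi> \<Longrightarrow>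
          (\<forall>\<theta>\<in>\<Delta>1 - {\<phi>}. noNE \<theta>) \<Longrightarrow> (\<forall>\<theta>\<in>\<Delta>2 - {\<psi>}. noNE \<theta>) \<Longrightarrow> noGD \<chi> \<Longrightarrow>
          der (\<Gamma> \<union> (\<Delta>1 - {\<phi>}) \<union> (\<Delta>2 - {\<psi>})) \<chi>"
| disjMon: "der \<Gamma> (Or \<phi> \<psi>) \<Longrightarrow> der \<Delta> \<chi> \<Longrightarrow> (\<forall>\<theta>\<in>\<Delta> - {\<psi>}. noNE \<theta>) \<Longrightarrow>
          der (\<Gamma> \<union> (\<Delta> - {\<psi>})) (Or \<phi> \<chi>)"
| botDisj: "der \<Gamma> (Or Bot \<phi>) \<Longrightarrow> der \<Gamma> \<phi>"
| botbotDisj: "der \<Gamma> (Or BotBot \<phi>) \<Longrightarrow> der \<Gamma> \<psi>"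
| diaMon: "der \<Gamma>0 \<psi> \<Longrightarrow> \<Gamma>0 \<subseteq> {\<phi>} \<Longrightarrow> der \<Gamma> (Dia \<phi>) \<Longrightarrow> der \<Gamma> (Dia \<psi>)"
| boxMon: "finite A \<Longrightarrow> der \<Gamma>0 \<psi> \<Longrightarrow> \<Gamma>0 \<subseteq> A \<Longrightarrow> (\<forall>\<phi>\<in>A. der (G \<phi>) (Box \<phi>)) \<Longrightarrow>
          der (\<Union>\<phi>\<in>A. G \<phi>) (Box \<psi>)"
| negDia1: "der \<Gamma> (Neg (Dia \<phi>)) \<Longrightarrow> der \<Gamma> (Box (Neg \<phi>))"
| negDia2: "der \<Gamma> (Box (Neg \<phi>)) \<Longrightarrow> der \<Gamma> (Neg (Dia \<phi>))"
| diaNE: "der \<Gamma> (Dia (Or \<phi> (And \<psi> NE))) \<Longrightarrow> der \<Gamma> (Dia \<psi>)"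
| diaJoin: "der \<Gamma> (Dia \<phi>) \<Longrightarrow> der \<Delta> (Dia \<psi>) \<Longrightarrow> der (\<Gamma> \<union> \<Delta>) (Dia (Or \<phi> \<psi>))"
| boxNE: "der \<Gamma> (Box (And \<phi> NE)) \<Longrightarrow> der \<Gamma> (Dia \<phi>)"
| boxDia: "der \<Gamma> (Box \<phi>) \<Longrightarrow> der \<Delta> (Dia \<psi>) \<Longrightarrow> der (\<Gamma> \<union> \<Delta>) (Box (Or \<phi> \<psi>))"
| gdI1: "der \<Gamma> \<phi> \<Longrightarrow> der \<Gamma> (GD \<phi> \<psi>)"
| gdI2: "der \<Gamma> \<phi> \<Longrightarrow> der \<Gamma> (GD \<psi> \<phi>)"
| gdE: "der \<Gamma> (GD \<phi> \<psi>) \<Longrightarrow> der \<Delta>1 \<chi> \<Longrightarrow> der \<Delta>2 \<chi> \<Longrightarrow>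
          der (\<Gamma> \<union> (\<Delta>1 - {\<phi>}) \<union> (\<Delta>2 - {\<psi>})) \<chi>"
| gdDistr: "der \<Gamma> (Or \<phi> (GD \<psi> \<chi>)) \<Longrightarrow> der \<Gamma> (GD (Or \<phi> \<psi>) (Or \<phi> \<chi>))"
| negGD1: "der \<Gamma> (Neg (GD \<phi> \<psi>)) \<Longrightarrow> der \<Gamma> (And (Neg \<phi>) (Neg \<psi>))"
| negGD2: "der \<Gamma> (And (Neg \<phi>) (Neg \<psi>)) \<Longrightarrow> der \<Gamma> (Neg (GD \<phi> \<psi>))"
| gdAx: "der {} (GD Bot NE)"
| diaGD1: "der \<Gamma> (Dia (GD \<phi> \<psi>)) \<Longrightarrow> der \<Gamma> (Or (Dia \<phi>) (Dia \<psi>))"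
| diaGD2: "der \<Gamma> (Or (Dia \<phi>) (Dia \<psi>)) \<Longrightarrow> der \<Gamma> (Dia (GD \<phi> \<psi>))"
| boxGD1: "der \<Gamma> (Box (GD \<phi> \<psi>)) \<Longrightarrow> der \<Gamma> (Or (Box \<phi>) (Box \<psi>))"
| boxGD2: "der \<Gamma> (Or (Box \<phi>) (Box \<psi>)) \<Longrightarrow> der \<Gamma> (Box (GD \<phi> \<psi>))"

definition derivable :: "form set \<Rightarrow> form \<Rightarrow> bool" where
  "derivable \<Phi> \<psi> = (\<exists>\<Gamma>. der \<Gamma> \<psi> \<and> \<Gamma> \<subseteq> \<Phi>)"

end

(* Most rules are sound directly by the clauses of the semantics; the others rest on the
   standard closure properties of BSML.  NE-free formulas have the empty team property and are
   downward closed, which is why the undischarged assumptions of negation introduction, of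
   disjunction elimination and of the monotonicity rule for disjunction must be NE-free: they
   then survive the passage to a subteam.  Formulas without global disjunction are closed under
   nonempty unions of teams, which makes disjunction elimination sound.  Classical formulas are
   flat and bivalent on singletons, so a team anti-supports a classical formula exactly when
   none of its singletons supports it; this gives negation introduction.  Finally, a team that
   both supports and anti-supports an NE-free formula is empty, which gives negation
   elimination. *)

theory Submission
  imports Defs
begin

lemma supp_Bot [simp]: "supp R V s Bot \<longleftrightarrow> s = {}"
  by (auto simp: Bot_def)

lemma supp_BotBot [simp]: "\<not> supp R V s BotBot"
  by (simp add: BotBot_def)

lemma supp_Box [simp]: "supp R V s (Box \<phi>) \<longleftrightarrow> (\<forall>w\<in>s. supp R V (R `` {w}) \<phi>)"
  by (simp add: Box_def)

lemma classical_noNE: "classical \<alpha> \<Longrightarrow> noNE \<alpha>"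
  by (induction \<alpha>) auto

lemma classical_noGD: "classical \<alpha> \<Longrightarrow> noGD \<alpha>"
  by (induction \<alpha>) auto

lemma
  assumes "noNE \<phi>"
  shows supp_empty_team: "supp R V {} \<phi>" and anti_empty_team: "anti R V {} \<phi>"
  using assms by (induction \<phi>) auto

lemma noNE_downward_closed:
  "noNE \<phi> \<Longrightarrow> t \<subseteq> s \<Longrightarrow>
    (supp R V s \<phi> \<longrightarrow> supp R V t \<phi>) \<and> (anti R V s \<phi> \<longrightarrow> anti R V t \<phi>)"
proof (induction \<phi> arbitrary: s t)
  case (And \<phi> \<psi>)
  have "anti R V t (And \<phi> \<psi>)" if "s = a \<union> b" "anti R V a \<phi>" "anti R V b \<psi>" for a b
  proof -
    have "anti R V (t \<inter> a) \<phi>" "anti R V (t \<inter> b) \<psi>"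
      using And that by (meson inf_le2 noNE.simps)+
    moreover have "t = (t \<inter> a) \<union> (t \<inter> b)" using And.prems that by blast
    ultimately show ?thesis by auto
  qed
  with And show ?case by auto
next
  case (Or \<phi> \<psi>)
  have "supp R V t (Or \<phi> \<psi>)" if "s = a \<union> b" "supp R V a \<phi>" "supp R V b \<psi>" for a b
  proof -
    have "supp R V (t \<inter> a) \<phi>" "supp R V (t \<inter> b) \<psi>"
      using Or that by (meson inf_le2 noNE.simps)+
    moreover have "t = (t \<inter> a) \<union> (t \<inter> b)" using Or.prems that by blast
    ultimately show ?thesis by auto
  qed
  with Or show ?case by auto
qed auto

lemma supp_downward_closed: "noNE \<phi> \<Longrightarrow> supp R V s \<phi> \<Longrightarrow> t \<subseteq> s \<Longrightarrow> supp R V t \<phi>"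
  using noNE_downward_closed by blast

lemma supp_all_downward_closed:
  "\<forall>\<gamma>\<in>\<Gamma>. noNE \<gamma> \<Longrightarrow> \<forall>\<gamma>\<in>\<Gamma>. supp R V s \<gamma> \<Longrightarrow> t \<subseteq> s \<Longrightarrow> \<forall>\<gamma>\<in>\<Gamma>. supp R V t \<gamma>"
  using supp_downward_closed by blast

lemma anti_downward_closed: "noNE \<phi> \<Longrightarrow> anti R V s \<phi> \<Longrightarrow> t \<subseteq> s \<Longrightarrow> anti R V t \<phi>"
  using noNE_downward_closed by blast

lemma Union_of_split_sets:
  assumes "\<forall>t\<in>T. \<exists>a b. t = a \<union> b \<and> L a \<and> M b" and "T \<noteq> {}"
  obtains A B where "\<Union>T = \<Union>A \<union> \<Union>B" "A \<noteq> {}" "B \<noteq> {}" "\<forall>a\<in>A. L a" "\<forall>b\<in>B. M b"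
proof -
  obtain a b where ab: "\<forall>t\<in>T. t = a t \<union> b t \<and> L (a t) \<and> M (b t)"
    using assms(1) by metis
  then have "\<Union>T = \<Union>(a ` T) \<union> \<Union>(b ` T)" by blast
  with that ab assms(2) show ?thesis by auto
qed

lemma noGD_Union_closed:
  "noGD \<phi> \<Longrightarrow> T \<noteq> {} \<Longrightarrow>
    ((\<forall>t\<in>T. supp R V t \<phi>) \<longrightarrow> supp R V (\<Union>T) \<phi>) \<and>
    ((\<forall>t\<in>T. anti R V t \<phi>) \<longrightarrow> anti R V (\<Union>T) \<phi>)"
proof (induction \<phi> arbitrary: T)
  case (And \<phi> \<psi>)
  have "anti R V (\<Union>T) (And \<phi> \<psi>)" if "\<forall>t\<in>T. anti R V t (And \<phi> \<psi>)"
  proof -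
    from that have "\<forall>t\<in>T. \<exists>a b. t = a \<union> b \<and> anti R V a \<phi> \<and> anti R V b \<psi>" by simp
    then obtain A B where "\<Union>T = \<Union>A \<union> \<Union>B" "A \<noteq> {}" "B \<noteq> {}"
      "\<forall>a\<in>A. anti R V a \<phi>" "\<forall>b\<in>B. anti R V b \<psi>"
      using And.prems(2) by (rule Union_of_split_sets)
    with And.IH(1)[of A] And.IH(2)[of B] And.prems(1) show ?thesis by auto
  qed
  with And.IH(1)[of T] And.IH(2)[of T] And.prems show ?case by auto
next
  case (Or \<phi> \<psi>)
  have "supp R V (\<Union>T) (Or \<phi> \<psi>)" if "\<forall>t\<in>T. supp R V t (Or \<phi> \<psi>)"
  proof -
    from that have "\<forall>t\<in>T. \<exists>a b. t = a \<union> b \<and> supp R V a \<phi> \<and> supp R V b \<psi>" by simp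
    then obtain A B where "\<Union>T = \<Union>A \<union> \<Union>B" "A \<noteq> {}" "B \<noteq> {}"
      "\<forall>a\<in>A. supp R V a \<phi>" "\<forall>b\<in>B. supp R V b \<psi>"
      using Or.prems(2) by (rule Union_of_split_sets)
    with Or.IH(1)[of A] Or.IH(2)[of B] Or.prems(1) show ?thesis by auto
  qed
  with Or.IH(1)[of T] Or.IH(2)[of T] Or.prems show ?case by auto
qed auto

lemma supp_Union_closed: "noGD \<phi> \<Longrightarrow> T \<noteq> {} \<Longrightarrow> \<forall>t\<in>T. supp R V t \<phi> \<Longrightarrow> supp R V (\<Union>T) \<phi>"
  using noGD_Union_closed by blast

lemma anti_Union_closed: "noGD \<phi> \<Longrightarrow> T \<noteq> {} \<Longrightarrow> \<forall>t\<in>T. anti R V t \<phi> \<Longrightarrow> anti R V (\<Union>T) \<phi>"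
  using noGD_Union_closed by blast

lemma supp_union_closed: "noGD \<phi> \<Longrightarrow> supp R V s \<phi> \<Longrightarrow> supp R V t \<phi> \<Longrightarrow> supp R V (s \<union> t) \<phi>"
  using supp_Union_closed[of \<phi> "{s, t}"] by simp

lemma flat_if_union_and_downward_closed:
  assumes "X {}" and "\<And>s t. X s \<Longrightarrow> t \<subseteq> s \<Longrightarrow> X t"
    and "\<And>T. T \<noteq> {} \<Longrightarrow> \<forall>t\<in>T. X t \<Longrightarrow> X (\<Union>T)"
  shows "X s \<longleftrightarrow> (\<forall>w\<in>s. X {w})"
proof
  show "X s \<Longrightarrow> \<forall>w\<in>s. X {w}" using assms(2) by blast
  show "\<forall>w\<in>s. X {w} \<Longrightarrow> X s"
    using assms(1) assms(3)[of "(\<lambda>w. {w}) ` s"] by (cases "s = {}") auto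
qed

lemma anti_flat:
  assumes "classical \<alpha>"
  shows "anti R V s \<alpha> \<longleftrightarrow> (\<forall>w\<in>s. anti R V {w} \<alpha>)"
proof -
  note noNE = classical_noNE[OF assms] and noGD = classical_noGD[OF assms]
  show ?thesis
    by (rule flat_if_union_and_downward_closed[where X = "\<lambda>s. anti R V s \<alpha>",
          OF _ anti_downward_closed[OF noNE] anti_Union_closed[OF noGD]])
      (simp add: anti_empty_team[OF noNE])
qed

lemma supp_anti_imp_empty: "noNE \<phi> \<Longrightarrow> supp R V s \<phi> \<Longrightarrow> anti R V s \<phi> \<Longrightarrow> s = {}"
proof (induction \<phi> arbitrary: s)
  case (And \<phi> \<psi>)
  from And.prems obtain t u where tu: "s = t \<union> u" "anti R V t \<phi>" "anti R V u \<psi>" by auto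
  with And.prems have "supp R V t \<phi>" "supp R V u \<psi>"
    using supp_downward_closed[of \<phi> R V s t] supp_downward_closed[of \<psi> R V s u] by auto
  with And.IH(1)[of t] And.IH(2)[of u] And.prems(1) tu show ?case by simp
next
  case (Or \<phi> \<psi>)
  from Or.prems obtain t u where tu: "s = t \<union> u" "supp R V t \<phi>" "supp R V u \<psi>" by auto
  with Or.prems have "anti R V t \<phi>" "anti R V u \<psi>"
    using anti_downward_closed[of \<phi> R V s t] anti_downward_closed[of \<psi> R V s u] by auto
  with Or.IH(1)[of t] Or.IH(2)[of u] Or.prems(1) tu show ?case by simp
next
  case (Dia \<phi>)
  show ?case
  proof (rule ccontr)
    assume "s \<noteq> {}"
    then obtain w where "w \<in> s" by blast
    with Dia.prems(2) have "\<exists>t. t \<noteq> {} \<and> t \<subseteq> R `` {w} \<and> supp R V t \<phi>" by simp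
    then obtain t where t: "t \<noteq> {}" "t \<subseteq> R `` {w}" "supp R V t \<phi>" by blast
    have "anti R V t \<phi>"
      using Dia.prems \<open>w \<in> s\<close> t(2) anti_downward_closed[of \<phi> R V "R `` {w}" t] by simp
    with Dia.IH[of t] Dia.prems(1) t show False by simp
  qed
next
  case (Neg \<phi>)
  show ?case using Neg.prems Neg.IH[of s] by simp
next
  case (GD \<phi> \<psi>)
  show ?case using GD.prems GD.IH(1)[of s] GD.IH(2)[of s] by auto
qed auto

lemma classical_singleton_bivalent: "classical \<alpha> \<Longrightarrow> supp R V {w} \<alpha> \<or> anti R V {w} \<alpha>"
proof (induction \<alpha> arbitrary: w)
  case (And \<alpha> \<beta>)
  then have "anti R V {} \<alpha>" "anti R V {} \<beta>"
    by (simp_all add: anti_empty_team classical_noNE)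
  then have "anti R V {w} (And \<alpha> \<beta>)" if "anti R V {w} \<alpha> \<or> anti R V {w} \<beta>"
    using that by simp (metis Un_empty_left Un_empty_right)
  with And show ?case by auto
next
  case (Or \<alpha> \<beta>)
  then have "supp R V {} \<alpha>" "supp R V {} \<beta>"
    by (simp_all add: supp_empty_team classical_noNE)
  then have "supp R V {w} (Or \<alpha> \<beta>)" if "supp R V {w} \<alpha> \<or> supp R V {w} \<beta>"
    using that by simp (metis Un_empty_left Un_empty_right)
  with Or show ?case by auto
next
  case (Dia \<alpha>)
  then have "(\<exists>v\<in>R `` {w}. supp R V {v} \<alpha>) \<or> anti R V (R `` {w}) \<alpha>"
    using anti_flat[of \<alpha> R V "R `` {w}"] by auto
  then show ?case by auto
qed auto

lemma anti_classical_iff: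
  assumes "classical \<alpha>"
  shows "anti R V s \<alpha> \<longleftrightarrow> (\<forall>w\<in>s. \<not> supp R V {w} \<alpha>)"
proof -
  have "anti R V {w} \<alpha> \<longleftrightarrow> \<not> supp R V {w} \<alpha>" for w
    using classical_singleton_bivalent[OF assms, of R V w]
      supp_anti_imp_empty[OF classical_noNE[OF assms], of R V "{w}"] by auto
  then show ?thesis
    using anti_flat[OF assms, of R V s] by simp
qed

lemma supp_Or_UnI: "supp R V t \<phi> \<Longrightarrow> supp R V u \<psi> \<Longrightarrow> supp R V (t \<union> u) (Or \<phi> \<psi>)"
  by auto

lemma supp_Dia_GD: "supp R V s (Dia (GD \<phi> \<psi>)) \<longleftrightarrow> supp R V s (Or (Dia \<phi>) (Dia \<psi>))"
proof
  assume "supp R V s (Dia (GD \<phi> \<psi>))"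
  let ?A = "{w\<in>s. supp R V {w} (Dia \<phi>)}" and ?B = "{w\<in>s. supp R V {w} (Dia \<psi>)}"
  have "supp R V (?A \<union> ?B) (Or (Dia \<phi>) (Dia \<psi>))"
    by (rule supp_Or_UnI) auto
  moreover have "w \<in> ?A \<union> ?B" if "w \<in> s" for w
  proof -
    have "\<exists>t. t \<noteq> {} \<and> t \<subseteq> R `` {w} \<and> supp R V t (GD \<phi> \<psi>)"
      using \<open>supp R V s (Dia (GD \<phi> \<psi>))\<close> that by simp
    with that show ?thesis by auto
  qed
  then have "?A \<union> ?B = s" by blast
  ultimately show "supp R V s (Or (Dia \<phi>) (Dia \<psi>))" by simp
next
  assume "supp R V s (Or (Dia \<phi>) (Dia \<psi>))"
  then obtain t u where "s = t \<union> u" "supp R V t (Dia \<phi>)" "supp R V u (Dia \<psi>)" by auto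
  then show "supp R V s (Dia (GD \<phi> \<psi>))" by (auto; metis)
qed

lemma supp_Box_GD: "supp R V s (Box (GD \<phi> \<psi>)) \<longleftrightarrow> supp R V s (Or (Box \<phi>) (Box \<psi>))"
proof
  assume "supp R V s (Box (GD \<phi> \<psi>))"
  let ?A = "{w\<in>s. supp R V (R `` {w}) \<phi>}" and ?B = "{w\<in>s. supp R V (R `` {w}) \<psi>}"
  have "supp R V (?A \<union> ?B) (Or (Box \<phi>) (Box \<psi>))"
    by (rule supp_Or_UnI) auto
  moreover have "?A \<union> ?B = s"
    using \<open>supp R V s (Box (GD \<phi> \<psi>))\<close> by auto
  ultimately show "supp R V s (Or (Box \<phi>) (Box \<psi>))" by simp
next
  assume "supp R V s (Or (Box \<phi>) (Box \<psi>))"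
  then show "supp R V s (Box (GD \<phi> \<psi>))" by auto
qed

lemma supp_Dia_mono:
  "(\<And>t. supp R V t \<phi> \<Longrightarrow> supp R V t \<psi>) \<Longrightarrow> supp R V s (Dia \<phi>) \<Longrightarrow> supp R V s (Dia \<psi>)"
  by (simp; metis)

lemma supp_Dia_Or_NE: "supp R V s (Dia (Or \<phi> (And \<psi> NE))) \<Longrightarrow> supp R V s (Dia \<psi>)"
  by (simp; metis Un_empty Un_upper2 subset_trans)

lemma supp_Dia_Or: "supp R V s (Dia \<phi>) \<Longrightarrow> supp R V s (Dia \<psi>) \<Longrightarrow> supp R V s (Dia (Or \<phi> \<psi>))"
  by (simp; metis Un_empty Un_least)

lemma supp_Box_And_NE: "supp R V s (Box (And \<phi> NE)) \<Longrightarrow> supp R V s (Dia \<phi>)"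
  by (simp; metis subset_refl)

lemma supp_Box_Or_Dia: "supp R V s (Box \<phi>) \<Longrightarrow> supp R V s (Dia \<psi>) \<Longrightarrow> supp R V s (Box (Or \<phi> \<psi>))"
  by (simp; metis sup.absorb1)

lemma supp_Neg_classicalI:
  assumes "classical \<alpha>" and "\<forall>\<gamma>\<in>\<Gamma>. noNE \<gamma>" and "\<forall>\<gamma>\<in>\<Gamma>. supp R V s \<gamma>"
    and "\<And>t. supp R V t \<alpha> \<Longrightarrow> \<forall>\<gamma>\<in>\<Gamma>. supp R V t \<gamma> \<Longrightarrow> t = {}"
  shows "supp R V s (Neg \<alpha>)"
proof -
  have "\<not> supp R V {w} \<alpha>" if "w \<in> s" for w
  proof
    assume "supp R V {w} \<alpha>"
    moreover have "\<forall>\<gamma>\<in>\<Gamma>. supp R V {w} \<gamma>"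
      using supp_all_downward_closed[OF assms(2,3)] that by simp
    ultimately show False
      using assms(4) by blast
  qed
  then show ?thesis by (simp add: anti_classical_iff[OF assms(1)])
qed

lemma supp_Or_elim:
  assumes "supp R V s (Or \<phi> \<psi>)" and "noGD \<chi>"
    and "\<forall>\<gamma>\<in>\<Delta>. noNE \<gamma>" and "\<forall>\<gamma>\<in>\<Delta>. supp R V s \<gamma>"
    and "\<And>t. supp R V t \<phi> \<Longrightarrow> \<forall>\<gamma>\<in>\<Delta>. supp R V t \<gamma> \<Longrightarrow> supp R V t \<chi>"
    and "\<And>u. supp R V u \<psi> \<Longrightarrow> \<forall>\<gamma>\<in>\<Delta>. supp R V u \<gamma> \<Longrightarrow> supp R V u \<chi>"
  shows "supp R V s \<chi>"
proof -
  from assms(1) obtain t u where tu: "s = t \<union> u" "supp R V t \<phi>" "supp R V u \<psi>" by auto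
  have "\<forall>\<gamma>\<in>\<Delta>. supp R V t \<gamma>" "\<forall>\<gamma>\<in>\<Delta>. supp R V u \<gamma>"
    using supp_all_downward_closed[OF assms(3,4)] tu(1) by simp_all
  with tu assms(5,6) have "supp R V t \<chi>" "supp R V u \<chi>" by blast+
  then show ?thesis
    unfolding tu(1) by (rule supp_union_closed[OF assms(2)])
qed

lemma supp_Or_mono_right:
  assumes "supp R V s (Or \<phi> \<psi>)"
    and "\<forall>\<gamma>\<in>\<Delta>. noNE \<gamma>" and "\<forall>\<gamma>\<in>\<Delta>. supp R V s \<gamma>"
    and "\<And>u. supp R V u \<psi> \<Longrightarrow> \<forall>\<gamma>\<in>\<Delta>. supp R V u \<gamma> \<Longrightarrow> supp R V u \<chi>"
  shows "supp R V s (Or \<phi> \<chi>)"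
proof -
  from assms(1) obtain t u where tu: "s = t \<union> u" "supp R V t \<phi>" "supp R V u \<psi>" by auto
  have "\<forall>\<gamma>\<in>\<Delta>. supp R V u \<gamma>"
    using supp_all_downward_closed[OF assms(2,3)] tu(1) by simp
  with tu assms(4) have "supp R V u \<chi>" by blast
  with tu show ?thesis by auto
qed

lemma der_sound:
  assumes "der \<Gamma> \<phi>" and "\<forall>\<gamma>\<in>\<Gamma>. supp R V s \<gamma>"
  shows "supp R V s \<phi>"
  using assms
proof (induction arbitrary: s rule: der.induct)
  case (negI \<alpha> \<Gamma>)
  have "t = {}" if "supp R V t \<alpha>" and "\<forall>\<gamma>\<in>\<Gamma> - {\<alpha>}. supp R V t \<gamma>" for t
    using that negI.IH[of t] by auto
  moreover have "\<forall>\<gamma>\<in>\<Gamma> - {\<alpha>}. noNE \<gamma>"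
    using negI.hyps(3) by blast
  ultimately show ?case
    using supp_Neg_classicalI[OF negI.hyps(1) _ negI.prems] by blast
next
  case (negE \<alpha> \<beta> \<Gamma> \<Delta>)
  have "s = {}"
    using supp_anti_imp_empty[OF classical_noNE[OF negE.hyps(1)]] negE.IH[of s] negE.prems by simp
  then show ?case
    using supp_empty_team[OF classical_noNE[OF negE.hyps(2)]] by simp
next
  case (disjI \<Gamma> \<phi> \<psi>)
  have "supp R V s \<phi>" "supp R V {} \<psi>"
    using disjI.IH disjI.prems supp_empty_team[OF disjI.hyps(2)] by simp_all
  then show ?case by (simp (no_asm)) (metis Un_empty_right)
next
  case (disjW \<Gamma> \<phi>)
  from disjW.IH[OF disjW.prems] show ?case by (simp (no_asm)) (metis Un_absorb)
next
  case (disjCom \<Gamma> \<phi> \<psi>)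
  from disjCom.IH[OF disjCom.prems] show ?case by (auto simp: Un_commute)
next
  case (disjE \<Gamma> \<phi> \<psi> \<Delta>1 \<chi> \<Delta>2)
  let ?\<Delta> = "(\<Delta>1 - {\<phi>}) \<union> (\<Delta>2 - {\<psi>})"
  have "supp R V t \<chi>" if "supp R V t \<phi>" and "\<forall>\<gamma>\<in>?\<Delta>. supp R V t \<gamma>" for t
    using that disjE.IH(2)[of t] by blast
  moreover have "supp R V u \<chi>" if "supp R V u \<psi>" and "\<forall>\<gamma>\<in>?\<Delta>. supp R V u \<gamma>" for u
    using that disjE.IH(3)[of u] by blast
  moreover have "supp R V s (Or \<phi> \<psi>)" and "\<forall>\<gamma>\<in>?\<Delta>. supp R V s \<gamma>"
    using disjE.IH(1)[of s] disjE.prems by simp_all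
  ultimately show ?case
    using supp_Or_elim[OF _ disjE.hyps(6), of R V s \<phi> \<psi> ?\<Delta>] disjE.hyps(4,5) by blast
next
  case (disjMon \<Gamma> \<phi> \<psi> \<Delta> \<chi>)
  have "supp R V u \<chi>" if "supp R V u \<psi>" and "\<forall>\<gamma>\<in>\<Delta> - {\<psi>}. supp R V u \<gamma>" for u
    using that disjMon.IH(2)[of u] by blast
  moreover have "supp R V s (Or \<phi> \<psi>)" and "\<forall>\<gamma>\<in>\<Delta> - {\<psi>}. supp R V s \<gamma>"
    using disjMon.IH(1)[of s] disjMon.prems by simp_all
  ultimately show ?case
    using supp_Or_mono_right[OF _ disjMon.hyps(3)] by blast
next
  case (botDisj \<Gamma> \<phi>)
  from botDisj.IH[OF botDisj.prems] show ?case by auto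
next
  case (botbotDisj \<Gamma> \<phi> \<psi>)
  from botbotDisj.IH[OF botbotDisj.prems] show ?case by simp
next
  case (diaMon \<Gamma>0 \<psi> \<phi> \<Gamma>)
  have "supp R V t \<psi>" if "supp R V t \<phi>" for t
    using that diaMon.hyps(2) by (intro diaMon.IH(1)) auto
  then show ?case
    using diaMon.IH(2)[OF diaMon.prems] by (rule supp_Dia_mono)
next
  case (boxMon A \<Gamma>0 \<psi> G)
  have "\<forall>\<phi>\<in>A. supp R V s (Box \<phi>)"
    using boxMon.IH(2) boxMon.prems by blast
  then have "\<forall>\<phi>\<in>\<Gamma>0. supp R V (R `` {w}) \<phi>" if "w \<in> s" for w
    using boxMon.hyps(3) that by auto
  then show ?case
    using boxMon.IH(1) by simp
next
  case (diaNE \<Gamma> \<phi> \<psi>)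
  from diaNE.IH[OF diaNE.prems] show ?case by (rule supp_Dia_Or_NE)
next
  case (diaJoin \<Gamma> \<phi> \<Delta> \<psi>)
  have "supp R V s (Dia \<phi>)" "supp R V s (Dia \<psi>)"
    using diaJoin.IH diaJoin.prems by blast+
  then show ?case by (rule supp_Dia_Or)
next
  case (boxNE \<Gamma> \<phi>)
  from boxNE.IH[OF boxNE.prems] show ?case by (rule supp_Box_And_NE)
next
  case (boxDia \<Gamma> \<phi> \<Delta> \<psi>)
  have "supp R V s (Box \<phi>)" "supp R V s (Dia \<psi>)"
    using boxDia.IH boxDia.prems by blast+
  then show ?case by (rule supp_Box_Or_Dia)
next
  case (gdE \<Gamma> \<phi> \<psi> \<Delta>1 \<chi> \<Delta>2)
  from gdE.IH(1)[of s] gdE.prems gdE.IH(2)[of s] gdE.IH(3)[of s] show ?case by auto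
next
  case (gdDistr \<Gamma> \<phi> \<psi> \<chi>)
  from gdDistr.IH[OF gdDistr.prems] show ?case by auto
next
  case (diaGD1 \<Gamma> \<phi> \<psi>)
  from diaGD1.IH[OF diaGD1.prems] show ?case by (simp only: supp_Dia_GD)
next
  case (diaGD2 \<Gamma> \<phi> \<psi>)
  from diaGD2.IH[OF diaGD2.prems] show ?case by (simp only: supp_Dia_GD)
next
  case (boxGD1 \<Gamma> \<phi> \<psi>)
  from boxGD1.IH[OF boxGD1.prems] show ?case by (simp only: supp_Box_GD)
next
  case (boxGD2 \<Gamma> \<phi> \<psi>)
  from boxGD2.IH[OF boxGD2.prems] show ?case by (simp only: supp_Box_GD)
qed simp_all

theorem theorem4p3:
  fixes \<Phi> :: "form set" and \<psi> :: form
    and R :: "('w \<times> 'w) set" and V :: "nat \<Rightarrow> 'w set" and s :: "'w set"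
  assumes "derivable \<Phi> \<psi>"
    and "\<forall>\<phi>\<in>\<Phi>. supp R V s \<phi>"
  shows "supp R V s \<psi>"
proof -
  from assms(1) obtain \<Gamma> where "der \<Gamma> \<psi>" and "\<Gamma> \<subseteq> \<Phi>"
    unfolding derivable_def by blast
  with assms(2) show ?thesis
    using der_sound by blast
qed

end
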